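(* For every field $F$, $P(F)\leq m_F$.
   Context: $P(F)\in\mathbb Z_{\geq1}\cup\{\infty\}$ is the smallest $p$ such that every sum of squares in $F$ is a sum of $p$ squares ($\infty$ if no such $p$ exists). $m_F\in\mathbb Z_{\geq1}\cup\{\infty\}$ is the smallest $m$ such that for every $n$, every subspace $V\subseteq F^n$ of dimension $\geq m$ on which the restriction of the quadratic form $q(x)=x_1^2+\dots+x_n^2$ is non-singular (i.e. $x\mapsto B_q(x,-)|_V$ is an isomorphism $V\to V^*$, where $B_q(x,y)=q(x+y)-q(x)-q(y)$) contains a vector $v$ with $q(v)=1$. *)

theory Defs
  imports Main "HOL-Library.Extended_Nat" "HOL-Library.FuncSet" "HOL-Library.Function_Algebras"
begin

text \<open>Vectors of F^n are represented as functions nat => F vanishing outside {0..<n}.\<close>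

definition vecs :: "nat \<Rightarrow> (nat \<Rightarrow> 'a::field) set" where
  "vecs n = {x. \<forall>i\<ge>n. x i = 0}"

definition vscale :: "'a::field \<Rightarrow> (nat \<Rightarrow> 'a) \<Rightarrow> (nat \<Rightarrow> 'a)" where
  "vscale c x = (\<lambda>i. c * x i)"

definition qf :: "nat \<Rightarrow> (nat \<Rightarrow> 'a::field) \<Rightarrow> 'a" where
  "qf n x = (\<Sum>i<n. (x i)^2)"

definition Bq :: "nat \<Rightarrow> (nat \<Rightarrow> 'a::field) \<Rightarrow> (nat \<Rightarrow> 'a) \<Rightarrow> 'a" where
  "Bq n x y = qf n (x + y) - qf n x - qf n y"

definition dual_space :: "(nat \<Rightarrow> 'a::field) set \<Rightarrow> ((nat \<Rightarrow> 'a) \<Rightarrow> 'a) set" where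
  "dual_space V = {f. f \<in> extensional V \<and>
      (\<forall>a\<in>V. \<forall>b\<in>V. f (a + b) = f a + f b) \<and>
      (\<forall>c. \<forall>a\<in>V. f (vscale c a) = c * f a)}"

definition nonsingular_on :: "nat \<Rightarrow> (nat \<Rightarrow> 'a::field) set \<Rightarrow> bool" where
  "nonsingular_on n V \<longleftrightarrow> bij_betw (\<lambda>x. restrict (Bq n x) V) V (dual_space V)"

definition sum_of_squares :: "'a::field \<Rightarrow> bool" where
  "sum_of_squares a \<longleftrightarrow> (\<exists>k (b::nat \<Rightarrow> 'a). a = (\<Sum>i<k. (b i)^2))"

definition sum_of_p_squares :: "nat \<Rightarrow> 'a::field \<Rightarrow> bool" where
  "sum_of_p_squares p a \<longleftrightarrow> (\<exists>b::nat \<Rightarrow> 'a. a = (\<Sum>i<p. (b i)^2))"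

text \<open>Pythagoras number P(F); Inf of the empty set of enat is \<infinity>.\<close>

definition pythagoras_number :: "'a::field itself \<Rightarrow> enat" where
  "pythagoras_number (_::'a itself) =
     Inf {enat p | p. p \<ge> 1 \<and> (\<forall>a::'a. sum_of_squares a \<longrightarrow> sum_of_p_squares p a)}"

definition m_property :: "'a::field itself \<Rightarrow> nat \<Rightarrow> bool" where
  "m_property (_::'a itself) m \<longleftrightarrow>
     (\<forall>n (V::(nat \<Rightarrow> 'a) set).
        V \<subseteq> vecs n \<and> module.subspace vscale V \<and> vector_space.dim vscale V \<ge> m
        \<and> nonsingular_on n V \<longrightarrow> (\<exists>v\<in>V. qf n v = 1))"

definition m_F :: "'a::field itself \<Rightarrow> enat" where
  "m_F T = Inf {enat m | m. m \<ge> 1 \<and> m_property T m}"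

end

theory Submission
  imports Defs
begin

text \<open>
  Let \<open>a = b\<^sub>1\<^sup>2 + \<dots> + b\<^sub>k\<^sup>2 \<noteq> 0\<close> and \<open>m \<ge> 1\<close> have the defining property of \<open>m\<^sub>F\<close>.
  In characteristic 2 every sum of squares is a square. Otherwise put \<open>\<beta> = b / a\<close>, so that
  \<open>q(\<beta>) = 1/a\<close>, and place \<open>m\<close> copies of \<open>\<beta>\<close> into disjoint blocks of coordinates of \<open>F\<^sup>m\<^sup>k\<close>.
  These are pairwise orthogonal, so on their span \<open>V\<close> the form \<open>q\<close> is diagonal with all
  entries \<open>1/a \<noteq> 0\<close>: \<open>V\<close> is non-singular of dimension \<open>m\<close>. A vector \<open>\<Sum> c\<^sub>j w\<^sub>j \<in> V\<close> with
  \<open>q = 1\<close> gives \<open>1 = (c\<^sub>1\<^sup>2 + \<dots> + c\<^sub>m\<^sup>2) / a\<close>, i.e. \<open>a\<close> is a sum of \<open>m\<close> squares.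
\<close>

interpretation vscale: vector_space "vscale :: 'a::field \<Rightarrow> (nat \<Rightarrow> 'a) \<Rightarrow> nat \<Rightarrow> 'a"
  by unfold_locales (auto simp: vscale_def algebra_simps)

definition dot :: "nat \<Rightarrow> (nat \<Rightarrow> 'a::field) \<Rightarrow> (nat \<Rightarrow> 'a) \<Rightarrow> 'a" where
  "dot n x y = (\<Sum>i<n. x i * y i)"

lemma Bq_eq_dot: "Bq n x y = 2 * dot n x y"
  unfolding Bq_def qf_def dot_def
  by (simp add: power2_eq_square sum_distrib_left algebra_simps flip: sum.distrib sum_subtractf)

lemma qf_eq_dot: "qf n x = dot n x x"
  unfolding qf_def dot_def by (simp add: power2_eq_square)

lemma dot_commute: "dot n x y = dot n y x"
  unfolding dot_def by (simp add: mult.commute)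

lemma dot_add_left: "dot n (x + y) z = dot n x z + dot n y z"
  unfolding dot_def by (simp add: algebra_simps sum.distrib)

lemma dot_scale_left: "dot n (vscale c x) z = c * dot n x z"
  unfolding dot_def vscale_def by (simp add: algebra_simps sum_distrib_left)

lemma dot_zero_left: "dot n 0 z = 0"
  unfolding dot_def by simp

lemma dot_sum_left: "dot n (\<Sum>v\<in>A. vscale (c v) v) z = (\<Sum>v\<in>A. c v * dot n v z)"
proof (induction A rule: infinite_finite_induct)
  case (insert x A)
  show ?case by (simp only: sum.insert[OF insert.hyps] dot_add_left dot_scale_left insert.IH)
qed (simp_all add: dot_def)

lemma subspace_vecs: "vscale.subspace (vecs n)"
  unfolding vscale.subspace_def vecs_def by (auto simp: vscale_def)

lemma restrict_Bq_in_dual_space: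
  assumes "vscale.subspace V"
  shows "restrict (Bq n x) V \<in> dual_space V"
proof -
  have "Bq n x (y + z) = Bq n x y + Bq n x z" "Bq n x (vscale c y) = c * Bq n x y" for y z c
    by (simp_all only: Bq_eq_dot dot_commute[of n x] dot_add_left dot_scale_left algebra_simps)
  then show ?thesis
    using vscale.subspace_add[OF assms] vscale.subspace_scale[OF assms] by (simp add: dual_space_def)
qed

lemma dual_space_zero:
  assumes "vscale.subspace V" "f \<in> dual_space V"
  shows "f 0 = 0"
proof -
  have "0 \<in> V" using vscale.subspace_0[OF assms(1)] .
  then have "f (vscale 0 0) = 0 * f 0" using assms(2) unfolding dual_space_def by blast
  then show ?thesis by (simp only: vscale.scale_zero_left mult_zero_left)
qed

lemma dual_space_sum:
  assumes V: "vscale.subspace V" and f: "f \<in> dual_space V" and "finite A" "A \<subseteq> V"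
  shows "f (\<Sum>v\<in>A. vscale (c v) v) = (\<Sum>v\<in>A. c v * f v)"
  using \<open>finite A\<close> \<open>A \<subseteq> V\<close>
proof (induction A rule: finite_induct)
  case empty
  then show ?case using dual_space_zero[OF V f] by (simp only: sum.empty)
next
  case (insert x A)
  have "vscale (c x) x \<in> V" "(\<Sum>v\<in>A. vscale (c v) v) \<in> V"
    using V insert.prems by (auto intro!: vscale.subspace_scale vscale.subspace_sum)
  then have "f (vscale (c x) x + (\<Sum>v\<in>A. vscale (c v) v)) = c x * f x + (\<Sum>v\<in>A. c v * f v)"
    using f insert unfolding dual_space_def by simp
  then show ?case by (simp only: sum.insert[OF insert.hyps])
qed

locale orthogonal_family =
  fixes n :: nat and W :: "(nat \<Rightarrow> 'a::field) set" and s :: 'a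
  assumes finite_W: "finite W"
    and dot_self: "v \<in> W \<Longrightarrow> dot n v v = s"
    and dot_orthogonal: "v \<in> W \<Longrightarrow> v' \<in> W \<Longrightarrow> v \<noteq> v' \<Longrightarrow> dot n v v' = 0"
    and s_nonzero: "s \<noteq> 0"
begin

abbreviation comb :: "((nat \<Rightarrow> 'a) \<Rightarrow> 'a) \<Rightarrow> nat \<Rightarrow> 'a" where
  "comb c \<equiv> \<Sum>v\<in>W. vscale (c v) v"

lemma span_eq_range_comb: "vscale.span W = range comb"
  using vscale.span_finite[OF finite_W] .

lemma dot_comb_subset:
  assumes "A \<subseteq> W" "w \<in> W"
  shows "dot n (\<Sum>v\<in>A. vscale (c v) v) w = (if w \<in> A then c w * s else 0)"
proof -
  have "dot n (\<Sum>v\<in>A. vscale (c v) v) w = (\<Sum>v\<in>A. if v = w then c w * s else 0)"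
    unfolding dot_sum_left using assms dot_self dot_orthogonal by (intro sum.cong) auto
  also have "\<dots> = (if w \<in> A then c w * s else 0)"
    using assms finite_subset[OF _ finite_W] by (simp add: sum.delta)
  finally show ?thesis .
qed

lemma dot_comb: "w \<in> W \<Longrightarrow> dot n (comb c) w = c w * s"
  using dot_comb_subset[of W] by simp

lemma Bq_comb_member: "w \<in> W \<Longrightarrow> Bq n (comb c) w = 2 * (c w * s)"
  by (simp add: Bq_eq_dot dot_comb)

lemma Bq_comb: "Bq n (comb c) (comb d) = 2 * s * (\<Sum>v\<in>W. c v * d v)"
proof -
  have "Bq n (comb c) (comb d) = 2 * (\<Sum>v\<in>W. c v * dot n (comb d) v)"
    by (simp only: Bq_eq_dot dot_sum_left dot_commute[of n _ "comb d"])
  also have "\<dots> = 2 * s * (\<Sum>v\<in>W. c v * d v)"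
    by (simp add: dot_comb sum_distrib_left algebra_simps)
  finally show ?thesis .
qed

lemma qf_comb: "qf n (comb c) = s * (\<Sum>v\<in>W. (c v)^2)"
proof -
  have "qf n (comb c) = (\<Sum>v\<in>W. c v * dot n (comb c) v)"
    by (simp only: qf_eq_dot dot_sum_left dot_commute[of n _ "comb c"])
  also have "\<dots> = s * (\<Sum>v\<in>W. (c v)^2)"
    by (simp add: dot_comb sum_distrib_left power2_eq_square algebra_simps)
  finally show ?thesis .
qed

lemma independent: "vscale.independent W"
  unfolding vscale.independent_explicit_module
proof (intro allI impI)
  fix A c v
  assume A: "finite A" "A \<subseteq> W" "(\<Sum>v\<in>A. vscale (c v) v) = 0" "v \<in> A"
  then have "c v * s = 0"
    using dot_comb_subset[of A v c] by (auto simp: dot_zero_left)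
  then show "c v = 0" using s_nonzero by simp
qed

lemma dim_span: "vscale.dim (vscale.span W) = card W"
  using vscale.dim_span_eq_card_independent[OF independent] .

lemma nonsingular_on_span:
  assumes two: "(2::'a) \<noteq> 0"
  shows "nonsingular_on n (vscale.span W)"
  unfolding nonsingular_on_def bij_betw_def
proof (intro conjI equalityI subsetI)
  let ?V = "vscale.span W"
  show "inj_on (\<lambda>x. restrict (Bq n x) ?V) ?V"
  proof (rule inj_onI)
    fix x y
    assume "x \<in> ?V" "y \<in> ?V" and eq: "restrict (Bq n x) ?V = restrict (Bq n y) ?V"
    then obtain c d where x: "x = comb c" and y: "y = comb d"
      unfolding span_eq_range_comb by auto
    have "c w = d w" if "w \<in> W" for w
    proof -
      have "Bq n x w = Bq n y w"
        using fun_cong[OF eq, of w] vscale.span_base[OF that] by simp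
      then show ?thesis using that two s_nonzero by (simp add: x y Bq_comb_member)
    qed
    then show "x = y" unfolding x y by (intro sum.cong) auto
  qed
next
  fix g assume "g \<in> (\<lambda>x. restrict (Bq n x) (vscale.span W)) ` vscale.span W"
  then show "g \<in> dual_space (vscale.span W)"
    using restrict_Bq_in_dual_space[OF vscale.subspace_span] by auto
next
  fix f assume f: "f \<in> dual_space (vscale.span W)"
  \<comment> \<open>the Gram matrix is \<open>2s\<close> times the identity, so \<open>f\<close> is represented by \<open>\<Sum>\<^sub>w f(w)/(2s) w\<close>\<close>
  define x where "x = comb (\<lambda>w. f w / (2 * s))"
  have "f = restrict (Bq n x) (vscale.span W)"
  proof
    fix z
    show "f z = restrict (Bq n x) (vscale.span W) z"
    proof (cases "z \<in> vscale.span W")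
      case True
      then obtain d where z: "z = comb d" unfolding span_eq_range_comb by auto
      have "f z = (\<Sum>v\<in>W. d v * f v)"
        unfolding z using dual_space_sum[OF vscale.subspace_span f finite_W vscale.span_superset] .
      then show ?thesis
        using True two s_nonzero by (simp add: x_def z Bq_comb sum_distrib_left field_simps)
    next
      case False
      then show ?thesis using f by (simp add: dual_space_def extensional_def)
    qed
  qed
  moreover have "x \<in> vscale.span W" unfolding x_def span_eq_range_comb by (rule rangeI)
  ultimately show "f \<in> (\<lambda>x. restrict (Bq n x) (vscale.span W)) ` vscale.span W"
    by (rule image_eqI)
qed

lemma inverse_sum_of_squares:
  assumes two: "(2::'a) \<noteq> 0" and m: "m_property TYPE('a) m" "m \<le> card W"
    and W: "W \<subseteq> vecs n"
  shows "\<exists>c. inverse s = (\<Sum>v\<in>W. (c v)^2)"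
proof -
  have "vscale.span W \<subseteq> vecs n"
    using vscale.span_minimal[OF W subspace_vecs] .
  moreover have "m \<le> vscale.dim (vscale.span W)"
    using m(2) dim_span by simp
  ultimately have "\<exists>v\<in>vscale.span W. qf n v = 1"
    using m(1) vscale.subspace_span nonsingular_on_span[OF two]
    unfolding m_property_def by simp
  then obtain c where "s * (\<Sum>v\<in>W. (c v)^2) = 1"
    unfolding span_eq_range_comb by (auto simp: qf_comb)
  then show ?thesis by (blast intro: inverse_unique)
qed

end

definition block_vec :: "nat \<Rightarrow> (nat \<Rightarrow> 'a::field) \<Rightarrow> nat \<Rightarrow> nat \<Rightarrow> 'a" where
  "block_vec k \<beta> j i = (if j * k \<le> i \<and> i < j * k + k then \<beta> (i - j * k) else 0)"

lemma block_end_le: "j < m \<Longrightarrow> j * k + k \<le> m * (k::nat)"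
  using mult_le_mono1[of "Suc j" m k] by simp

lemma block_vec_in_vecs: "j < m \<Longrightarrow> block_vec k \<beta> j \<in> vecs (m * k)"
  using block_end_le[of j m k] by (auto simp: vecs_def block_vec_def)

lemma dot_block_vec:
  assumes "j < m" "j' < m"
  shows "dot (m * k) (block_vec k \<beta> j) (block_vec k \<beta> j') = (if j = j' then \<Sum>r<k. (\<beta> r)^2 else 0)"
proof (cases "j = j'")
  case False
  have disjoint: "block_vec k \<beta> j i * block_vec k \<beta> j' i = 0" for i
  proof (cases "j * k \<le> i \<and> i < j * k + k \<and> j' * k \<le> i \<and> i < j' * k + k")
    case True
    then have "j * k < (j' + 1) * k" "j' * k < (j + 1) * k" by auto
    then have "j < j' + 1" "j' < j + 1" using mult_less_cancel2 by blast+
    then show ?thesis using False by simp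
  qed (auto simp: block_vec_def)
  then show ?thesis using False by (simp add: dot_def disjoint del: mult_eq_0_iff)
next
  case True
  have "dot (m * k) (block_vec k \<beta> j) (block_vec k \<beta> j)
      = (\<Sum>i\<in>{i\<in>{..<m * k}. j * k \<le> i \<and> i < j * k + k}. (\<beta> (i - j * k))^2)"
    unfolding dot_def block_vec_def sum.inter_filter[OF finite_lessThan]
    by (intro sum.cong) (auto simp: power2_eq_square)
  also have "{i\<in>{..<m * k}. j * k \<le> i \<and> i < j * k + k} = {0 + j * k..<k + j * k}"
    using block_end_le[OF assms(1), of k] by auto
  also have "(\<Sum>i\<in>{0 + j * k..<k + j * k}. (\<beta> (i - j * k))^2) = (\<Sum>r<k. (\<beta> r)^2)"
    by (simp only: sum.shift_bounds_nat_ivl) (simp add: atLeast0LessThan)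
  finally show ?thesis using True by simp
qed

lemma sum_squares_eq_square_sum:
  fixes b :: "nat \<Rightarrow> 'a::field"
  assumes "(2::'a) = 0"
  shows "(\<Sum>i<k. (b i)^2) = (\<Sum>i<k. b i)^2"
proof (induction k)
  case (Suc k)
  then show ?case using assms by (simp add: power2_sum)
qed simp

lemma sum_of_p_squares_char_2:
  fixes a :: "'a::field"
  assumes "(2::'a) = 0" "p \<ge> 1" "sum_of_squares a"
  shows "sum_of_p_squares p a"
proof -
  obtain k and b :: "nat \<Rightarrow> 'a" where a: "a = (\<Sum>i<k. (b i)^2)"
    using assms(3) unfolding sum_of_squares_def by blast
  let ?t = "\<Sum>i<k. b i"
  have "(\<Sum>j<p. (if j = 0 then ?t else 0)^2) = (\<Sum>j<p. if j = 0 then ?t^2 else 0)"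
    by (rule sum.cong) auto
  also have "\<dots> = a"
    using assms(2) sum_squares_eq_square_sum[OF assms(1)] by (simp add: a sum.delta)
  finally show ?thesis unfolding sum_of_p_squares_def
    by (intro exI[of _ "\<lambda>j. if j = 0 then ?t else 0"]) (rule sym)
qed

lemma m_property_imp_sum_of_m_squares:
  fixes b :: "nat \<Rightarrow> 'a::field"
  assumes two: "(2::'a) \<noteq> 0" and m: "m_property TYPE('a) m"
    and a: "a = (\<Sum>i<k. (b i)^2)" "a \<noteq> 0"
  shows "sum_of_p_squares m a"
proof -
  define \<beta> where "\<beta> i = b i / a" for i
  define W where "W = block_vec k \<beta> ` {..<m}"
  have "(\<Sum>i<k. (\<beta> i)^2) = inverse a"
    using a by (simp add: \<beta>_def power_divide power2_eq_square field_simps flip: sum_divide_distrib)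
  then have dot_W: "dot (m * k) (block_vec k \<beta> j) (block_vec k \<beta> j') = (if j = j' then inverse a else 0)"
    if "j < m" "j' < m" for j j'
    using dot_block_vec[OF that, of k \<beta>] by simp
  have inj: "inj_on (block_vec k \<beta>) {..<m}"
  proof (rule inj_onI)
    fix j j' assume "j \<in> {..<m}" "j' \<in> {..<m}" "block_vec k \<beta> j = block_vec k \<beta> j'"
    then show "j = j'" using dot_W[of j j] dot_W[of j j'] a(2) by (auto split: if_splits)
  qed
  interpret orthogonal_family "m * k" W "inverse a"
    by unfold_locales (use a(2) dot_W in \<open>auto simp: W_def\<close>)
  have "W \<subseteq> vecs (m * k)" unfolding W_def using block_vec_in_vecs by blast
  then obtain c where "inverse (inverse a) = (\<Sum>v\<in>W. (c v)^2)"
    using inverse_sum_of_squares[OF two m] card_image[OF inj] by (auto simp: W_def)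
  then have "a = (\<Sum>j<m. (c (block_vec k \<beta> j))^2)"
    by (simp add: W_def sum.reindex[OF inj])
  then show ?thesis unfolding sum_of_p_squares_def by (intro exI[of _ "c \<circ> block_vec k \<beta>"]) simp
qed

lemma m_property_imp_sum_of_p_squares:
  fixes a :: "'a::field"
  assumes m: "m \<ge> 1" "m_property TYPE('a) m" and a: "sum_of_squares a"
  shows "sum_of_p_squares m a"
proof -
  consider "(2::'a) = 0" | "a = 0" | "(2::'a) \<noteq> 0" "a \<noteq> 0" by blast
  then show ?thesis
  proof cases
    case 1
    then show ?thesis using sum_of_p_squares_char_2 m(1) a by blast
  next
    case 2
    then show ?thesis unfolding sum_of_p_squares_def by (intro exI[of _ "\<lambda>_. 0"]) simp
  next
    case 3
    then show ?thesis
      using a m_property_imp_sum_of_m_squares[OF _ m(2)] unfolding sum_of_squares_def by blast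
  qed
qed

theorem proposition2p5:
  shows "pythagoras_number TYPE('a::field) \<le> m_F TYPE('a)"
  unfolding pythagoras_number_def m_F_def
  by (rule Inf_superset_mono) (blast intro: m_property_imp_sum_of_p_squares)

end
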